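(* Let $V$ be a finite-dimensional real vector space and $\mathcal{C}\subset V$ an open convex cone with closure $\overline{\mathcal{C}}$. Every completely monotone function $f:\mathcal{C}\rightarrow\mathbb{R}_{+}$ satisfies \[ \sum_{i=1}^{n}f(x_{i})-\sum_{1\leq i<j\leq n}f(x_{i}+x_{j})+\cdots+(-1)^{n-1}f\Bigl(\sum_{i=1}^{n}x_{i}\Bigr)\geq 0 \] for all $x_{1},\ldots,x_{n}\in\mathcal{C}$ and $n\geq1$ (the general term being $(-1)^{k-1}\sum_{1\le i_1<\cdots<i_k\le n} f(x_{i_1}+\cdots+x_{i_k})$). If moreover $f$ admits a continuous extension to $\overline{\mathcal{C}}$, then \[ f(0)\geq\sum_{i=1}^{n}f(x_{i})-\sum_{1\leq i<j\leq n}f(x_{i}+x_{j})+\cdots+(-1)^{n-1}f\Bigl(\sum_{i=1}^{n}x_{i}\Bigr)\geq 0 \] for all $x_{1},\ldots,x_{n}\in\overline{\mathcal{C}}$ and $n\geq1$.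
   Context: A function $f:\mathcal{C}\rightarrow\mathbb{R}_{+}$ on an open convex cone $\mathcal{C}$ is completely monotone if $f$ is $C^{\infty}$ on $\mathcal{C}$ and for all integers $k\geq1$ and all $v_{1},\ldots,v_{k}\in\mathcal{C}$, $(-1)^{k}D_{v_{1}}\cdots D_{v_{k}}f(x)\geq0$ for all $x\in\mathcal{C}$, where $D_{v}$ is the directional derivative along $v$. *)

theory Defs
  imports "HOL-Analysis.Analysis"
begin

definition open_convex_cone :: "'a::real_normed_vector set \<Rightarrow> bool" where
  "open_convex_cone C \<longleftrightarrow> open C \<and> convex C \<and> (\<forall>x\<in>C. \<forall>t::real. t > 0 \<longrightarrow> t *\<^sub>R x \<in> C)"

definition dir_deriv :: "'a::real_normed_vector \<Rightarrow> ('a \<Rightarrow> real) \<Rightarrow> 'a \<Rightarrow> real" where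
  "dir_deriv v g x = deriv (\<lambda>t::real. g (x + t *\<^sub>R v)) 0"

fun iter_dir_deriv :: "'a::real_normed_vector list \<Rightarrow> ('a \<Rightarrow> real) \<Rightarrow> 'a \<Rightarrow> real" where
  "iter_dir_deriv [] g = g"
| "iter_dir_deriv (v # vs) g = dir_deriv v (iter_dir_deriv vs g)"

definition smooth_on :: "'a::euclidean_space set \<Rightarrow> ('a \<Rightarrow> real) \<Rightarrow> bool" where
  "smooth_on S g \<longleftrightarrow>
     (\<forall>vs. continuous_on S (iter_dir_deriv vs g)) \<and>
     (\<forall>vs v. \<forall>x\<in>S. (\<lambda>t::real. iter_dir_deriv vs g (x + t *\<^sub>R v)) differentiable (at 0))"

definition completely_monotone :: "'a::euclidean_space set \<Rightarrow> ('a \<Rightarrow> real) \<Rightarrow> bool" where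
  "completely_monotone C f \<longleftrightarrow>
     (\<forall>x\<in>C. f x \<ge> 0) \<and> smooth_on C f \<and>
     (\<forall>vs. vs \<noteq> [] \<longrightarrow> set vs \<subseteq> C \<longrightarrow>
        (\<forall>x\<in>C. (-1) ^ length vs * iter_dir_deriv vs f x \<ge> 0))"

definition alt_sum :: "('a::real_vector \<Rightarrow> real) \<Rightarrow> (nat \<Rightarrow> 'a) \<Rightarrow> nat \<Rightarrow> real" where
  "alt_sum f x n = (\<Sum>S \<in> {S. S \<subseteq> {1..n} \<and> S \<noteq> {}}. (-1) ^ (card S - 1) * f (\<Sum>i\<in>S. x i))"

end

theory Submission
  imports Defs
begin

text \<open>Write \<open>\<Delta>\<^sub>h G y = G y - G (y + h)\<close>. The alternating sum is
  \<open>f 0 - \<Delta>\<^sub>x\<^sub>1 \<cdots> \<Delta>\<^sub>x\<^sub>n f 0\<close>, and it telescopes into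
  \<open>\<Sum>\<^sub>k<n \<Delta>\<^sub>x\<^sub>1 \<cdots> \<Delta>\<^sub>x\<^sub>k f (x\<^sub>k\<^sub>+\<^sub>1)\<close>.
  Differences commute with directional derivatives, so by induction on the number of
  differences, \<open>(-1)\<^sup>m D\<^sub>v\<^sub>1 \<cdots> D\<^sub>v\<^sub>m \<Delta>\<^sub>x\<^sub>1 \<cdots> \<Delta>\<^sub>x\<^sub>n f \<ge> 0\<close> on the cone: the next
  difference \<open>\<Delta>\<^sub>h\<close> is nonnegative because the function it is applied to has a nonpositive
  derivative along the ray in direction \<open>h\<close>. For points of the closure, shift every point
  by \<open>\<epsilon> c\<close> with \<open>c\<close> in the cone and let \<open>\<epsilon> \<rightarrow> 0\<close>.\<close>

lemma open_convex_cone_scaleR: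
  assumes "open_convex_cone C" "a \<in> C" "t > 0"
  shows "t *\<^sub>R a \<in> C"
  using assms unfolding open_convex_cone_def by auto

lemma open_convex_cone_add:
  assumes "open_convex_cone C" "a \<in> C" "b \<in> C"
  shows "a + b \<in> C"
proof -
  have "(1/2::real) *\<^sub>R a + (1/2::real) *\<^sub>R b \<in> C"
    using assms unfolding open_convex_cone_def convex_def by auto
  then have "(2::real) *\<^sub>R ((1/2::real) *\<^sub>R a + (1/2::real) *\<^sub>R b) \<in> C"
    using open_convex_cone_scaleR[OF assms(1)] by simp
  then show ?thesis by (simp add: scaleR_add_right)
qed

lemma open_convex_cone_add_sum:
  assumes "open_convex_cone C" "finite S" "y \<in> C" "\<forall>i\<in>S. x i \<in> C"
  shows "y + sum x S \<in> C"
  using assms(2,4)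
proof (induction S rule: finite_induct)
  case (insert a S)
  then have "(y + sum x S) + x a \<in> C" using open_convex_cone_add[OF assms(1)] by auto
  then show ?case using insert by (simp add: algebra_simps)
qed (use assms(3) in simp)

lemma open_convex_cone_ray:
  assumes "open_convex_cone C" "y \<in> C" "h \<in> C" "t \<ge> 0"
  shows "y + t *\<^sub>R h \<in> C"
proof (cases "t = 0")
  case False
  then have "t *\<^sub>R h \<in> C" using assms open_convex_cone_scaleR by force
  then show ?thesis using open_convex_cone_add assms by blast
qed (use assms in simp)

lemma open_convex_cone_closure_add_scaleR:
  fixes C :: "'a::euclidean_space set"
  assumes "open_convex_cone C" "x \<in> closure C" "c \<in> C" "(e::real) > 0"
  shows "x + e *\<^sub>R c \<in> C"
proof -
  have "convex C" "c \<in> interior C"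
    using assms(1,3) unfolding open_convex_cone_def by (auto simp: interior_open)
  define d where "d = e / (1 + e)"
  have "0 < d" "d \<le> 1" using assms(4) by (auto simp: d_def)
  have "x - d *\<^sub>R (x - c) \<in> C"
    using mem_interior_closure_convex_shrink[OF \<open>convex C\<close> \<open>c \<in> interior C\<close> assms(2)
        \<open>0 < d\<close> \<open>d \<le> 1\<close>] interior_subset by blast
  then have "(1 + e) *\<^sub>R (x - d *\<^sub>R (x - c)) \<in> C"
    using open_convex_cone_scaleR[OF assms(1)] assms(4) by simp
  moreover have "(1 + e) * d = e" using assms(4) by (simp add: d_def)
  then have "(1 + e) *\<^sub>R (x - d *\<^sub>R (x - c)) = (1 + e) *\<^sub>R x - e *\<^sub>R (x - c)"
    by (simp add: scaleR_diff_right)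
  then have "(1 + e) *\<^sub>R (x - d *\<^sub>R (x - c)) = x + e *\<^sub>R c"
    by (simp add: algebra_simps)
  ultimately show ?thesis by simp
qed

lemma open_convex_cone_zero_in_closure:
  assumes "open_convex_cone C" "C \<noteq> {}"
  shows "0 \<in> closure C"
proof -
  obtain c where "c \<in> C" using assms(2) by blast
  have "(\<lambda>m. inverse (real (Suc m)) *\<^sub>R c) \<longlonglongrightarrow> 0"
    using tendsto_scaleR[OF LIMSEQ_inverse_real_of_nat tendsto_const, of c] by simp
  moreover have "\<forall>m. inverse (real (Suc m)) *\<^sub>R c \<in> C"
    using open_convex_cone_scaleR[OF assms(1) \<open>c \<in> C\<close>] by simp
  ultimately show ?thesis unfolding closure_sequential by (intro exI conjI) auto
qed

definition iterated_difference ::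
    "('a::real_vector \<Rightarrow> real) \<Rightarrow> nat \<Rightarrow> (nat \<Rightarrow> 'a) \<Rightarrow> 'a \<Rightarrow> real" where
  "iterated_difference G n x y = (\<Sum>S \<in> Pow {1..n}. (-1) ^ card S * G (y + sum x S))"

lemma iterated_difference_0 [simp]: "iterated_difference G 0 x y = G y"
  unfolding iterated_difference_def by simp

lemma iterated_difference_Suc:
  "iterated_difference G (Suc n) x y =
     iterated_difference G n x y - iterated_difference G n x (y + x (Suc n))"
proof -
  let ?t = "\<lambda>y S. (-1) ^ card S * G (y + sum x S)"
  have inj: "inj_on (insert (Suc n)) (Pow {1..n})"
    by (rule inj_on_inverseI[where g="\<lambda>S. S - {Suc n}"]) auto
  have "{1..Suc n} = insert (Suc n) {1..n}" by auto
  then have "iterated_difference G (Suc n) x y =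
      sum (?t y) (Pow {1..n}) + sum (?t y) (insert (Suc n) ` Pow {1..n})"
    unfolding iterated_difference_def by (simp only: Pow_insert) (rule sum.union_disjoint, auto)
  also have "sum (?t y) (insert (Suc n) ` Pow {1..n}) = (\<Sum>S \<in> Pow {1..n}. - ?t (y + x (Suc n)) S)"
    unfolding sum.reindex[OF inj]
  proof (rule sum.cong)
    fix S assume "S \<in> Pow {1..n}"
    then have "finite S" "Suc n \<notin> S" using finite_subset by auto
    then show "(?t y \<circ> insert (Suc n)) S = - ?t (y + x (Suc n)) S"
      by (simp add: algebra_simps)
  qed simp
  finally show ?thesis unfolding iterated_difference_def by (simp add: sum_negf)
qed

lemma alt_sum_eq_iterated_difference: "alt_sum f x n = f 0 - iterated_difference f n x 0"
proof -
  have "iterated_difference f n x 0 =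
      f 0 + (\<Sum>S \<in> Pow {1..n} - {{}}. (-1) ^ card S * f (sum x S))"
    unfolding iterated_difference_def by (subst sum.remove[of _ "{}"]) auto
  also have "(\<Sum>S \<in> Pow {1..n} - {{}}. (-1) ^ card S * f (sum x S)) =
      (\<Sum>S \<in> Pow {1..n} - {{}}. - ((-1) ^ (card S - 1) * f (sum x S)))"
  proof (rule sum.cong)
    fix S assume "S \<in> Pow {1..n} - {{}}"
    then have "finite S" "S \<noteq> {}" using finite_subset by auto
    then have "card S = Suc (card S - 1)" by (simp add: card_gt_0_iff)
    then have "(-1::real) ^ card S = - ((-1) ^ (card S - 1))"
      by (metis power_Suc mult_minus1)
    then show "(-1) ^ card S * f (sum x S) = - ((-1) ^ (card S - 1) * f (sum x S))" by simp
  qed simp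
  moreover have "{S. S \<subseteq> {1..n} \<and> S \<noteq> {}} = Pow {1..n} - {{}}" by auto
  ultimately show ?thesis unfolding alt_sum_def by (simp add: sum_negf)
qed

lemma alt_sum_telescoping:
  "alt_sum f x n = (\<Sum>k<n. iterated_difference f k x (x (Suc k)))"
  by (induction n) (simp_all add: alt_sum_eq_iterated_difference iterated_difference_Suc)

lemma dir_deriv_has_real_derivative:
  fixes G :: "'a::real_normed_vector \<Rightarrow> real"
  assumes "(\<lambda>s::real. G (a + t *\<^sub>R h + s *\<^sub>R h)) differentiable (at 0)"
  shows "((\<lambda>t. G (a + t *\<^sub>R h)) has_real_derivative dir_deriv h G (a + t *\<^sub>R h)) (at t)"
proof -
  let ?z = "a + t *\<^sub>R h"
  have "((\<lambda>s. G (?z + s *\<^sub>R h)) has_real_derivative dir_deriv h G ?z) (at 0)"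
    using assms DERIV_deriv_iff_real_differentiable unfolding dir_deriv_def by blast
  then have "((\<lambda>s. G (?z + (s + - t) *\<^sub>R h)) has_real_derivative dir_deriv h G ?z) (at t)"
    using DERIV_shift[of "\<lambda>s. G (?z + s *\<^sub>R h)" _ t "- t"] by simp
  then show ?thesis by (simp add: algebra_simps)
qed

lemma iterated_difference_has_real_derivative:
  fixes G :: "'a::real_normed_vector \<Rightarrow> real"
  assumes "\<And>S. S \<subseteq> {1..n} \<Longrightarrow>
    (\<lambda>s::real. G ((y + sum x S) + t *\<^sub>R h + s *\<^sub>R h)) differentiable (at 0)"
  shows "((\<lambda>t. iterated_difference G n x (y + t *\<^sub>R h)) has_real_derivative
    iterated_difference (dir_deriv h G) n x (y + t *\<^sub>R h)) (at t)"
proof -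
  have "((\<lambda>t. \<Sum>S \<in> Pow {1..n}. (-1) ^ card S * G ((y + sum x S) + t *\<^sub>R h))
      has_real_derivative
        (\<Sum>S \<in> Pow {1..n}. (-1) ^ card S * dir_deriv h G ((y + sum x S) + t *\<^sub>R h))) (at t)"
    by (intro DERIV_sum DERIV_cmult dir_deriv_has_real_derivative assms) auto
  then show ?thesis unfolding iterated_difference_def by (simp add: algebra_simps)
qed

lemma completely_monotone_iterated_difference_has_real_derivative:
  fixes C :: "'a::euclidean_space set"
  assumes cone: "open_convex_cone C" and cm: "completely_monotone C f"
    and "y \<in> C" "h \<in> C" "t \<ge> 0" "\<forall>i\<in>{1..n}. x i \<in> C"
  shows "((\<lambda>t. iterated_difference (iter_dir_deriv vs f) n x (y + t *\<^sub>R h)) has_real_derivative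
    iterated_difference (iter_dir_deriv (h # vs) f) n x (y + t *\<^sub>R h)) (at t)"
proof (simp only: iter_dir_deriv.simps, rule iterated_difference_has_real_derivative)
  fix S assume "S \<subseteq> {1..n}"
  then have "finite S" "\<forall>i\<in>S. x i \<in> C" using assms(6) finite_subset by auto
  then have "(y + t *\<^sub>R h) + sum x S \<in> C"
    using open_convex_cone_add_sum[OF cone _ open_convex_cone_ray[OF cone assms(3-5)]] by blast
  then have "(\<lambda>s::real. iter_dir_deriv vs f (((y + t *\<^sub>R h) + sum x S) + s *\<^sub>R h))
      differentiable (at 0)"
    using cm unfolding completely_monotone_def smooth_on_def by blast
  then show "(\<lambda>s::real. iter_dir_deriv vs f ((y + sum x S) + t *\<^sub>R h + s *\<^sub>R h))
      differentiable (at 0)"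
    by (simp add: ac_simps)
qed

lemma completely_monotone_iterated_difference_nonneg:
  fixes C :: "'a::euclidean_space set"
  assumes cone: "open_convex_cone C" and cm: "completely_monotone C f"
    and "set vs \<subseteq> C" "y \<in> C" "\<forall>i\<in>{1..n}. x i \<in> C"
  shows "0 \<le> (-1) ^ length vs * iterated_difference (iter_dir_deriv vs f) n x y"
  using assms(3-5)
proof (induction n arbitrary: vs y)
  case 0
  then show ?case using cm unfolding completely_monotone_def by (cases "vs = []") auto
next
  case (Suc n)
  let ?h = "x (Suc n)"
  define \<psi> where
    "\<psi> t = (-1) ^ length vs * iterated_difference (iter_dir_deriv vs f) n x (y + t *\<^sub>R ?h)"
    for t :: real
  have "\<psi> 1 \<le> \<psi> 0"
  proof (rule DERIV_nonpos_imp_nonincreasing[of 0 1 \<psi>])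
    fix t :: real assume "0 \<le> t" "t \<le> 1"
    let ?D = "(-1) ^ length vs * iterated_difference (iter_dir_deriv (?h # vs) f) n x (y + t *\<^sub>R ?h)"
    have "(\<psi> has_real_derivative ?D) (at t)"
      unfolding \<psi>_def[abs_def] using Suc.prems \<open>0 \<le> t\<close>
      by (intro DERIV_cmult completely_monotone_iterated_difference_has_real_derivative[OF cone cm])
        auto
    moreover have "?D \<le> 0"
      using Suc.IH[of "?h # vs" "y + t *\<^sub>R ?h"] Suc.prems \<open>0 \<le> t\<close>
        open_convex_cone_ray[OF cone] by auto
    ultimately show "\<exists>D. (\<psi> has_real_derivative D) (at t) \<and> D \<le> 0" by blast
  qed simp
  then show ?case
    unfolding \<psi>_def iterated_difference_Suc by (simp add: right_diff_distrib)
qed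

lemma tendsto_iterated_difference:
  fixes g :: "'a::real_normed_vector \<Rightarrow> real"
  assumes "continuous_on K g" "closed K"
    and "\<And>m S. S \<subseteq> {1..n} \<Longrightarrow> ym m + sum (xm m) S \<in> K"
    and "\<And>i. (\<lambda>m. xm m i) \<longlonglongrightarrow> x i" "ym \<longlonglongrightarrow> y"
  shows "(\<lambda>m. iterated_difference g n (xm m) (ym m)) \<longlonglongrightarrow> iterated_difference g n x y"
  unfolding iterated_difference_def
proof (intro tendsto_sum tendsto_mult_left)
  fix S assume "S \<in> Pow {1..n}"
  have lim: "(\<lambda>m. ym m + sum (xm m) S) \<longlonglongrightarrow> y + sum x S"
    by (intro tendsto_add tendsto_sum assms(4,5))
  have in_K: "ym m + sum (xm m) S \<in> K" for m using assms(3) \<open>S \<in> Pow {1..n}\<close> by blast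
  show "(\<lambda>m. g (ym m + sum (xm m) S)) \<longlonglongrightarrow> g (y + sum x S)"
    by (rule continuous_on_tendsto_compose[OF assms(1) lim
        closed_sequentially[OF assms(2) in_K lim]]) (simp add: in_K)
qed

lemma completely_monotone_iterated_difference_nonneg_closure:
  fixes C :: "'a::euclidean_space set"
  assumes cone: "open_convex_cone C" and cm: "completely_monotone C f"
    and g: "continuous_on (closure C) g" "\<forall>y\<in>C. g y = f y"
    and "\<forall>i\<in>{1..n}. x i \<in> closure C" "y \<in> closure C"
  shows "0 \<le> iterated_difference g n x y"
proof -
  obtain c where "c \<in> C" using \<open>y \<in> closure C\<close> by (metis closure_empty empty_iff ex_in_conv)
  define e :: "nat \<Rightarrow> real" where "e m = inverse (real (Suc m))" for m
  have "e m > 0" for m unfolding e_def by simp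
  have "e \<longlonglongrightarrow> 0" unfolding e_def by (rule LIMSEQ_inverse_real_of_nat)
  define xm where "xm m i = x i + e m *\<^sub>R c" for m i
  define ym where "ym m = y + e m *\<^sub>R c" for m
  have ym: "ym m \<in> C" for m unfolding ym_def
    by (rule open_convex_cone_closure_add_scaleR[OF cone \<open>y \<in> closure C\<close> \<open>c \<in> C\<close> \<open>e m > 0\<close>])
  have xm: "\<forall>i\<in>{1..n}. xm m i \<in> C" for m unfolding xm_def
    using open_convex_cone_closure_add_scaleR[OF cone _ \<open>c \<in> C\<close> \<open>e m > 0\<close>] assms(5) by blast
  have shifted: "ym m + sum (xm m) S \<in> C" if "S \<subseteq> {1..n}" for m S
    by (rule open_convex_cone_add_sum[OF cone _ ym]) (use that xm finite_subset[OF that] in auto)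
  have "iterated_difference g n (xm m) (ym m) = iterated_difference f n (xm m) (ym m)" for m
    unfolding iterated_difference_def using shifted g(2) by (intro sum.cong) auto
  moreover have "0 \<le> iterated_difference f n (xm m) (ym m)" for m
    using completely_monotone_iterated_difference_nonneg[OF cone cm _ ym xm, of "[]"] by simp
  moreover have "(\<lambda>m. iterated_difference g n (xm m) (ym m)) \<longlonglongrightarrow> iterated_difference g n x y"
  proof (rule tendsto_iterated_difference[OF g(1)])
    show "ym m + sum (xm m) S \<in> closure C" if "S \<subseteq> {1..n}" for m S
      using shifted[OF that] closure_subset by blast
    have shift_lim: "(\<lambda>m. e m *\<^sub>R c) \<longlonglongrightarrow> 0"
      using tendsto_scaleR[OF \<open>e \<longlonglongrightarrow> 0\<close> tendsto_const, of c] by simp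
    show "(\<lambda>m. xm m i) \<longlonglongrightarrow> x i" for i
      unfolding xm_def using tendsto_add[OF tendsto_const shift_lim] by simp
    show "ym \<longlonglongrightarrow> y"
      unfolding ym_def using tendsto_add[OF tendsto_const shift_lim] by simp
  qed simp
  ultimately show ?thesis by (intro tendsto_lowerbound) auto
qed

theorem theorem4p4:
  fixes C :: "'a::euclidean_space set" and f :: "'a \<Rightarrow> real"
  assumes "open_convex_cone C"
    and "completely_monotone C f"
  shows "(\<forall>n::nat. \<forall>x::nat \<Rightarrow> 'a. n \<ge> 1 \<longrightarrow> (\<forall>i\<in>{1..n}. x i \<in> C) \<longrightarrow> alt_sum f x n \<ge> 0)
    \<and> (\<forall>g. continuous_on (closure C) g \<and> (\<forall>y\<in>C. g y = f y) \<longrightarrow>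
         (\<forall>n::nat. \<forall>x::nat \<Rightarrow> 'a. n \<ge> 1 \<longrightarrow> (\<forall>i\<in>{1..n}. x i \<in> closure C) \<longrightarrow>
            g 0 \<ge> alt_sum g x n \<and> alt_sum g x n \<ge> 0))"
proof (intro conjI allI impI)
  fix n :: nat and x :: "nat \<Rightarrow> 'a"
  assume "\<forall>i\<in>{1..n}. x i \<in> C"
  then have "0 \<le> iterated_difference f k x (x (Suc k))" if "k < n" for k
    using completely_monotone_iterated_difference_nonneg[OF assms, of "[]" "x (Suc k)" k x] that
    by auto
  then show "alt_sum f x n \<ge> 0" unfolding alt_sum_telescoping by (intro sum_nonneg) simp
next
  fix g n and x :: "nat \<Rightarrow> 'a"
  assume g: "continuous_on (closure C) g \<and> (\<forall>y\<in>C. g y = f y)"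
    and "n \<ge> 1" and x: "\<forall>i\<in>{1..n}. x i \<in> closure C"
  note nonneg = completely_monotone_iterated_difference_nonneg_closure[OF assms g[THEN conjunct1]
      g[THEN conjunct2]]
  have "C \<noteq> {}" using x \<open>n \<ge> 1\<close> by force
  then show "g 0 \<ge> alt_sum g x n"
    using nonneg[OF x open_convex_cone_zero_in_closure[OF assms(1)]]
    unfolding alt_sum_eq_iterated_difference by simp
  have "0 \<le> iterated_difference g k x (x (Suc k))" if "k < n" for k
    using nonneg[of k x "x (Suc k)"] x that by auto
  then show "alt_sum g x n \<ge> 0" unfolding alt_sum_telescoping by (intro sum_nonneg) simp
qed

end
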